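(* Let $J$ be a set, let $\mathbb I=[J]^{\leq\omega}$ be the set of countable subsets of $J$ ordered by inclusion, and for $D\in\mathbb I$ let $G_D=\{\sigma\in\operatorname{Sym}(J)\mid\operatorname{supp}(\sigma)\subseteq D\}$ with the subgroup topology. Then $\{G_D\}_{D\in\mathbb I}$ (with inclusions as bonding maps) satisfies ACP, and $\operatorname{colim}_{D\in\mathbb I}G_D=\operatorname{Sym}_\omega(J)$.
   Context: $\operatorname{Sym}(J)$ is the group of permutations of $J$ with the pointwise topology induced from $J^J$, $J$ being discrete; it is a topological group. The support of $\sigma$ is $\operatorname{supp}(\sigma)=\{x\in J\mid\sigma(x)\neq x\}$, and $\operatorname{Sym}_\omega(J)$ is the subgroup of permutations with countable support, with the subspace topology. $\operatorname{colim}$ denotes the union with the colimit space topology $\{U\mid U\cap G_D\text{ open in }G_D\ \forall D\}$. ACP means that this colimit space topology coincides with the finest group topology on the union making all inclusions continuous. *)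

theory Defs
  imports "HOL-Analysis.Analysis"
begin

text \<open>The set J is modelled by the type 'a (J = UNIV).\<close>

definition supp :: "('a \<Rightarrow> 'a) \<Rightarrow> 'a set" where
  "supp \<sigma> = {x. \<sigma> x \<noteq> x}"

definition Sym :: "('a \<Rightarrow> 'a) set" where
  "Sym = {\<sigma>. bij \<sigma>}"

definition pointwise_top :: "('a \<Rightarrow> 'a) topology" where
  "pointwise_top = product_topology (\<lambda>_. discrete_topology UNIV) UNIV"

definition Sym_top :: "('a \<Rightarrow> 'a) topology" where
  "Sym_top = subtopology pointwise_top Sym"

definition Sym_omega :: "('a \<Rightarrow> 'a) set" where
  "Sym_omega = {\<sigma> \<in> Sym. countable (supp \<sigma>)}"

definition Sym_omega_top :: "('a \<Rightarrow> 'a) topology" where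
  "Sym_omega_top = subtopology Sym_top Sym_omega"

definition G :: "'a set \<Rightarrow> ('a \<Rightarrow> 'a) set" where
  "G D = {\<sigma> \<in> Sym. supp \<sigma> \<subseteq> D}"

definition G_top :: "'a set \<Rightarrow> ('a \<Rightarrow> 'a) topology" where
  "G_top D = subtopology Sym_top (G D)"

definition colim_open :: "'i set \<Rightarrow> ('i \<Rightarrow> 'b topology) \<Rightarrow> 'b set \<Rightarrow> bool" where
  "colim_open I X U \<longleftrightarrow> U \<subseteq> (\<Union>i\<in>I. topspace (X i)) \<and>
     (\<forall>i\<in>I. openin (X i) (U \<inter> topspace (X i)))"

lemma istopology_colim_open: "istopology (colim_open I X)"
proof -
  have 1: "colim_open I X (S \<inter> T)" if a: "colim_open I X S" "colim_open I X T" for S T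
  proof -
    have "openin (X i) (S \<inter> T \<inter> topspace (X i))" if "i \<in> I" for i
    proof -
      have "S \<inter> T \<inter> topspace (X i) = (S \<inter> topspace (X i)) \<inter> (T \<inter> topspace (X i))"
        by blast
      moreover have "openin (X i) (S \<inter> topspace (X i))" "openin (X i) (T \<inter> topspace (X i))"
        using a that unfolding colim_open_def by blast+
      ultimately show ?thesis by (metis openin_Int)
    qed
    moreover have "S \<inter> T \<subseteq> (\<Union>i\<in>I. topspace (X i))" using a unfolding colim_open_def by blast
    ultimately show ?thesis unfolding colim_open_def by blast
  qed
  have 2: "colim_open I X (\<Union>K)" if a: "\<forall>S\<in>K. colim_open I X S" for K
  proof -
    have "openin (X i) (\<Union>K \<inter> topspace (X i))" if "i \<in> I" for i
    proof -
      have "\<Union>K \<inter> topspace (X i) = \<Union>((\<lambda>S. S \<inter> topspace (X i)) ` K)" by blast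
      moreover have "\<forall>S\<in>K. openin (X i) (S \<inter> topspace (X i))"
        using a that unfolding colim_open_def by blast
      ultimately show ?thesis by (metis (no_types, lifting) image_iff openin_Union)
    qed
    moreover have "\<Union>K \<subseteq> (\<Union>i\<in>I. topspace (X i))" using a unfolding colim_open_def by blast
    ultimately show ?thesis unfolding colim_open_def by blast
  qed
  show ?thesis unfolding istopology_def using 1 2 by blast
qed

definition colim_topology :: "'i set \<Rightarrow> ('i \<Rightarrow> 'b topology) \<Rightarrow> 'b topology" where
  "colim_topology I X = topology (colim_open I X)"

definition perm_group_topology :: "('a \<Rightarrow> 'a) set \<Rightarrow> ('a \<Rightarrow> 'a) topology \<Rightarrow> bool" where
  "perm_group_topology H T \<longleftrightarrow> topspace T = H \<and>
     continuous_map (prod_topology T T) T (\<lambda>p. fst p \<circ> snd p) \<and>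
     continuous_map T T (\<lambda>f. inv f)"

text \<open>ACP: the colimit space topology on the union equals the finest group topology
  on the union making all inclusions continuous.\<close>
definition ACP :: "'i set \<Rightarrow> ('i \<Rightarrow> ('a \<Rightarrow> 'a) topology) \<Rightarrow> bool" where
  "ACP I X \<longleftrightarrow>
     (let H = (\<Union>i\<in>I. topspace (X i)); C = colim_topology I X in
       perm_group_topology H C \<and> (\<forall>i\<in>I. continuous_map (X i) C id) \<and>
       (\<forall>T. perm_group_topology H T \<and> (\<forall>i\<in>I. continuous_map (X i) T id) \<longrightarrow>
            (\<forall>U. openin T U \<longrightarrow> openin C U)))"

end

(* Pointwise convergence of permutations is governed by finitely many values: s' o t' agrees
   with s o t on F once t' agrees with t on F and s' agrees with s on t(F), and inv g agrees with
   inv s on F once g agrees with s on inv s(F). Hence the pointwise topology on any group of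
   permutations is a group topology, in particular on Sym_omega.

   The colimit topology of the G_D is this topology on Sym_omega. The nontrivial inclusion is a
   closing-off argument: if sigma lies in a set U with open traces on all G_D but no neighbourhood
   {g. g = sigma on F} of sigma (F finite) lies in U, choose a counterexample tau_F for every
   finite F. Closing supp sigma countably often under the supports of these counterexamples
   yields a countable D with tau_(F Int D) in G D for every F; as tau_(F Int D) and sigma both fix
   everything outside D, this contradicts openness of the trace of U on G D at sigma.

   A colimit topology is finer than every topology making all inclusions continuous, so once it
   is a group topology it is the finest such group topology, which is ACP. *)

theory Submission
  imports Defs
begin

definition pointwise_nbhd :: "'a set \<Rightarrow> ('a \<Rightarrow> 'b) \<Rightarrow> ('a \<Rightarrow> 'b) set" where
  "pointwise_nbhd F f = {g. \<forall>x\<in>F. g x = f x}"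

lemma openin_discrete_product_iff:
  "openin (product_topology (\<lambda>_. discrete_topology UNIV) UNIV) W \<longleftrightarrow>
     (\<forall>f\<in>W. \<exists>F. finite F \<and> pointwise_nbhd F f \<subseteq> W)"
proof -
  have PiE_UNIV: "Pi\<^sub>E UNIV U = Pi UNIV U" for U :: "'a \<Rightarrow> 'b set"
    by (simp add: PiE_def extensional_def)
  have "(\<exists>U. finite {i. U i \<noteq> UNIV} \<and> f \<in> Pi UNIV U \<and> Pi UNIV U \<subseteq> W) \<longleftrightarrow>
        (\<exists>F. finite F \<and> pointwise_nbhd F f \<subseteq> W)" for f
  proof
    assume "\<exists>U. finite {i. U i \<noteq> UNIV} \<and> f \<in> Pi UNIV U \<and> Pi UNIV U \<subseteq> W"
    then obtain U where "finite {i. U i \<noteq> UNIV}" "f \<in> Pi UNIV U" "Pi UNIV U \<subseteq> W"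
      by blast
    moreover have "pointwise_nbhd {i. U i \<noteq> UNIV} f \<subseteq> Pi UNIV U" if "f \<in> Pi UNIV U"
    proof
      fix g assume "g \<in> pointwise_nbhd {i. U i \<noteq> UNIV} f"
      then have "g i \<in> U i" for i
        using that by (cases "U i = UNIV") (auto simp: pointwise_nbhd_def)
      then show "g \<in> Pi UNIV U"
        by simp
    qed
    ultimately show "\<exists>F. finite F \<and> pointwise_nbhd F f \<subseteq> W"
      by blast
  next
    assume "\<exists>F. finite F \<and> pointwise_nbhd F f \<subseteq> W"
    then obtain F where F: "finite F" "pointwise_nbhd F f \<subseteq> W"
      by blast
    define U where "U i = {y. i \<in> F \<longrightarrow> y = f i}" for i
    have "{i. U i \<noteq> UNIV} \<subseteq> F" "f \<in> Pi UNIV U" "Pi UNIV U = pointwise_nbhd F f"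
      by (auto simp: U_def pointwise_nbhd_def Pi_iff)
    with F show "\<exists>U. finite {i. U i \<noteq> UNIV} \<and> f \<in> Pi UNIV U \<and> Pi UNIV U \<subseteq> W"
      by (metis finite_subset)
  qed
  then show ?thesis
    by (simp add: openin_product_topology_alt PiE_UNIV)
qed

lemma topspace_pointwise_top [simp]: "topspace pointwise_top = UNIV"
  by (simp add: pointwise_top_def PiE_def extensional_def)

lemma openin_pointwise_nbhd:
  assumes "finite F"
  shows "openin pointwise_top (pointwise_nbhd F f)"
  unfolding pointwise_top_def openin_discrete_product_iff
proof
  fix g assume "g \<in> pointwise_nbhd F f"
  then have "pointwise_nbhd F g = pointwise_nbhd F f"
    by (simp add: pointwise_nbhd_def)
  with assms show "\<exists>F'. finite F' \<and> pointwise_nbhd F' g \<subseteq> pointwise_nbhd F f"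
    by blast
qed

lemma openin_pointwise_subtopology_nbhd:
  "finite F \<Longrightarrow> openin (subtopology pointwise_top S) (S \<inter> pointwise_nbhd F f)"
  by (simp add: openin_pointwise_nbhd openin_subtopology_Int2)

lemma openin_pointwise_subtopology_iff:
  "openin (subtopology pointwise_top S) V \<longleftrightarrow>
     V \<subseteq> S \<and> (\<forall>f\<in>V. \<exists>F. finite F \<and> S \<inter> pointwise_nbhd F f \<subseteq> V)"
proof
  assume "openin (subtopology pointwise_top S) V"
  then obtain W where "openin pointwise_top W" "V = W \<inter> S"
    by (auto simp: openin_subtopology)
  then show "V \<subseteq> S \<and> (\<forall>f\<in>V. \<exists>F. finite F \<and> S \<inter> pointwise_nbhd F f \<subseteq> V)"
    unfolding pointwise_top_def openin_discrete_product_iff by blast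
next
  assume V: "V \<subseteq> S \<and> (\<forall>f\<in>V. \<exists>F. finite F \<and> S \<inter> pointwise_nbhd F f \<subseteq> V)"
  show "openin (subtopology pointwise_top S) V"
    unfolding openin_subopen[of _ V]
  proof
    fix f assume "f \<in> V"
    with V obtain F where "finite F" "S \<inter> pointwise_nbhd F f \<subseteq> V"
      by blast
    with \<open>f \<in> V\<close> V show "\<exists>T. openin (subtopology pointwise_top S) T \<and> f \<in> T \<and> T \<subseteq> V"
      using openin_pointwise_subtopology_nbhd[of F S f]
      by (intro exI[of _ "S \<inter> pointwise_nbhd F f"]) (auto simp: pointwise_nbhd_def)
  qed
qed

lemma supp_comp_subset: "supp (f \<circ> g) \<subseteq> supp f \<union> supp g"
  by (auto simp: supp_def)

lemma supp_inv_eq: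
  assumes "bij f"
  shows "supp (inv f) = supp f"
proof -
  have "inv f x = x \<longleftrightarrow> f x = x" for x
    using bij_inv_eq_iff[OF assms, of x x] by auto
  then show ?thesis
    by (simp add: supp_def)
qed

lemma Sym_omega_subset_Sym: "Sym_omega \<subseteq> Sym"
  by (auto simp: Sym_omega_def)

lemma Sym_omega_comp:
  assumes "f \<in> Sym_omega" "g \<in> Sym_omega"
  shows "f \<circ> g \<in> Sym_omega"
proof -
  have "countable (supp f \<union> supp g)"
    using assms by (simp add: Sym_omega_def)
  then have "countable (supp (f \<circ> g))"
    by (rule countable_subset[OF supp_comp_subset])
  with assms show ?thesis
    by (simp add: Sym_omega_def Sym_def bij_comp)
qed

lemma Sym_omega_inv: "f \<in> Sym_omega \<Longrightarrow> inv f \<in> Sym_omega"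
  by (simp add: Sym_omega_def Sym_def supp_inv_eq bij_imp_bij_inv)

lemma comp_mem_pointwise_nbhd:
  "s' \<in> pointwise_nbhd (t ` F) s \<Longrightarrow> t' \<in> pointwise_nbhd F t \<Longrightarrow> s' \<circ> t' \<in> pointwise_nbhd F (s \<circ> t)"
  by (simp add: pointwise_nbhd_def)

lemma continuous_map_pointwise_comp:
  assumes "\<And>f g. f \<in> S \<Longrightarrow> g \<in> S \<Longrightarrow> f \<circ> g \<in> S"
  shows "continuous_map (prod_topology (subtopology pointwise_top S) (subtopology pointwise_top S))
           (subtopology pointwise_top S) (\<lambda>p. fst p \<circ> snd p)"
  unfolding continuous_map_def
proof (intro conjI allI impI)
  show "(\<lambda>p. fst p \<circ> snd p) \<in> topspace (prod_topology (subtopology pointwise_top S) (subtopology pointwise_top S))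
          \<rightarrow> topspace (subtopology pointwise_top S)"
    using assms by auto
  fix V assume V: "openin (subtopology pointwise_top S) V"
  let ?P = "{p \<in> topspace (prod_topology (subtopology pointwise_top S) (subtopology pointwise_top S)).
               fst p \<circ> snd p \<in> V}"
  show "openin (prod_topology (subtopology pointwise_top S) (subtopology pointwise_top S)) ?P"
    unfolding openin_prod_topology_alt
  proof (intro allI impI)
    fix s t assume "(s, t) \<in> ?P"
    then have "s \<in> S" "t \<in> S" "s \<circ> t \<in> V"
      by auto
    with V obtain F where F: "finite F" "S \<inter> pointwise_nbhd F (s \<circ> t) \<subseteq> V"
      unfolding openin_pointwise_subtopology_iff by blast
    have "(S \<inter> pointwise_nbhd (t ` F) s) \<times> (S \<inter> pointwise_nbhd F t) \<subseteq> ?P"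
    proof
      fix p assume "p \<in> (S \<inter> pointwise_nbhd (t ` F) s) \<times> (S \<inter> pointwise_nbhd F t)"
      then have "fst p \<in> S" "snd p \<in> S" "fst p \<circ> snd p \<in> pointwise_nbhd F (s \<circ> t)"
        by (simp_all add: mem_Times_iff comp_mem_pointwise_nbhd)
      moreover from this assms have "fst p \<circ> snd p \<in> V"
        using F(2) by blast
      ultimately show "p \<in> ?P"
        by (simp add: mem_Times_iff)
    qed
    moreover have "s \<in> S \<inter> pointwise_nbhd (t ` F) s" "t \<in> S \<inter> pointwise_nbhd F t"
      using \<open>s \<in> S\<close> \<open>t \<in> S\<close> by (simp_all add: pointwise_nbhd_def)
    moreover have "openin (subtopology pointwise_top S) (S \<inter> pointwise_nbhd (t ` F) s)"
      "openin (subtopology pointwise_top S) (S \<inter> pointwise_nbhd F t)"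
      using F(1) by (simp_all add: openin_pointwise_subtopology_nbhd)
    ultimately show "\<exists>U1 U2. openin (subtopology pointwise_top S) U1 \<and> openin (subtopology pointwise_top S) U2 \<and>
                       s \<in> U1 \<and> t \<in> U2 \<and> U1 \<times> U2 \<subseteq> ?P"
      by (intro exI[of _ "S \<inter> pointwise_nbhd (t ` F) s"] exI[of _ "S \<inter> pointwise_nbhd F t"]) simp
  qed
qed

lemma inv_mem_pointwise_nbhd:
  assumes "bij s" "bij g" "g \<in> pointwise_nbhd (inv s ` F) s"
  shows "inv g \<in> pointwise_nbhd F (inv s)"
proof -
  have "inv g x = inv s x" if "x \<in> F" for x
  proof -
    have "g (inv s x) = s (inv s x)"
      using assms(3) that by (simp add: pointwise_nbhd_def)
    also have "\<dots> = x"
      using assms(1) by (simp add: bij_is_surj surj_f_inv_f)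
    finally show ?thesis
      using bij_inv_eq_iff[OF assms(2), of "inv s x" x] by simp
  qed
  then show ?thesis
    by (simp add: pointwise_nbhd_def)
qed

lemma continuous_map_pointwise_inv:
  assumes "S \<subseteq> Sym" "\<And>f. f \<in> S \<Longrightarrow> inv f \<in> S"
  shows "continuous_map (subtopology pointwise_top S) (subtopology pointwise_top S) inv"
  unfolding continuous_map_def
proof (intro conjI allI impI)
  show "inv \<in> topspace (subtopology pointwise_top S) \<rightarrow> topspace (subtopology pointwise_top S)"
    using assms by auto
  fix V assume V: "openin (subtopology pointwise_top S) V"
  show "openin (subtopology pointwise_top S) {s \<in> topspace (subtopology pointwise_top S). inv s \<in> V}"
    unfolding openin_pointwise_subtopology_iff
  proof (intro conjI ballI)
    fix s assume "s \<in> {s \<in> topspace (subtopology pointwise_top S). inv s \<in> V}"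
    then have "s \<in> S" "inv s \<in> V"
      by auto
    with V obtain F where F: "finite F" "S \<inter> pointwise_nbhd F (inv s) \<subseteq> V"
      unfolding openin_pointwise_subtopology_iff by blast
    have "S \<inter> pointwise_nbhd (inv s ` F) s \<subseteq> {s \<in> topspace (subtopology pointwise_top S). inv s \<in> V}"
    proof
      fix g assume g: "g \<in> S \<inter> pointwise_nbhd (inv s ` F) s"
      with assms(1) \<open>s \<in> S\<close> have "bij s" "bij g"
        by (auto simp: Sym_def)
      with g have "inv g \<in> pointwise_nbhd F (inv s)"
        by (simp add: inv_mem_pointwise_nbhd)
      with g F(2) assms(2) show "g \<in> {s \<in> topspace (subtopology pointwise_top S). inv s \<in> V}"
        by auto
    qed
    with F(1) show "\<exists>F. finite F \<and> S \<inter> pointwise_nbhd F s \<subseteq>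
                         {s \<in> topspace (subtopology pointwise_top S). inv s \<in> V}"
      by blast
  qed auto
qed

lemma perm_group_topology_pointwise:
  assumes "S \<subseteq> Sym" "\<And>f g. f \<in> S \<Longrightarrow> g \<in> S \<Longrightarrow> f \<circ> g \<in> S" "\<And>f. f \<in> S \<Longrightarrow> inv f \<in> S"
  shows "perm_group_topology S (subtopology pointwise_top S)"
  using continuous_map_pointwise_comp[OF assms(2)] continuous_map_pointwise_inv[OF assms(1,3)]
  by (simp add: perm_group_topology_def)

lemma openin_colim_topology: "openin (colim_topology I X) = colim_open I X"
  by (simp add: colim_topology_def istopology_colim_open)

lemma topspace_colim_topology: "topspace (colim_topology I X) = (\<Union>i\<in>I. topspace (X i))"
proof -
  have "(\<Union>j\<in>I. topspace (X j)) \<inter> topspace (X i) = topspace (X i)" if "i \<in> I" for i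
    using that by blast
  then have "colim_open I X (\<Union>i\<in>I. topspace (X i))"
    by (simp add: colim_open_def)
  then show ?thesis
    unfolding topspace_def openin_colim_topology colim_open_def by blast
qed

lemma continuous_map_id_colim_topology:
  assumes "i \<in> I"
  shows "continuous_map (X i) (colim_topology I X) id"
proof -
  have "topspace (X i) \<subseteq> topspace (colim_topology I X)"
    using assms by (auto simp: topspace_colim_topology)
  moreover have "openin (X i) {x \<in> topspace (X i). id x \<in> U}" if "openin (colim_topology I X) U" for U
  proof -
    have "{x \<in> topspace (X i). id x \<in> U} = U \<inter> topspace (X i)"
      by auto
    with that assms show ?thesis
      by (simp add: openin_colim_topology colim_open_def)
  qed
  ultimately show ?thesis
    by (auto simp: continuous_map_def)
qed

lemma openin_colim_topology_if_continuous_id: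
  assumes "topspace T = (\<Union>i\<in>I. topspace (X i))" "\<And>i. i \<in> I \<Longrightarrow> continuous_map (X i) T id"
    and "openin T U"
  shows "openin (colim_topology I X) U"
  unfolding openin_colim_topology colim_open_def
proof (intro conjI ballI)
  show "U \<subseteq> (\<Union>i\<in>I. topspace (X i))"
    using assms openin_subset by blast
  fix i assume "i \<in> I"
  then have "openin (X i) {x \<in> topspace (X i). id x \<in> U}"
    using assms(2,3) by (simp add: continuous_map_def)
  moreover have "{x \<in> topspace (X i). id x \<in> U} = U \<inter> topspace (X i)"
    by auto
  ultimately show "openin (X i) (U \<inter> topspace (X i))"
    by simp
qed

lemma finite_subset_Union_incseq:
  assumes "incseq A" "finite F" "F \<subseteq> (\<Union>n. A n)"
  shows "\<exists>n. F \<subseteq> A n"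
  using assms(2,3)
proof (induction F rule: finite_induct)
  case (insert x F)
  then obtain n m where "F \<subseteq> A n" "x \<in> A m"
    by blast
  moreover have "A n \<subseteq> A (max n m)" "A m \<subseteq> A (max n m)"
    using assms(1) by (simp_all add: incseqD)
  ultimately show ?case
    by blast
qed simp

lemma countable_closure_under_finite_subsets:
  assumes "countable A" "\<And>F. finite F \<Longrightarrow> countable (h F)"
  shows "\<exists>D. countable D \<and> A \<subseteq> D \<and> (\<forall>F. finite F \<longrightarrow> F \<subseteq> D \<longrightarrow> h F \<subseteq> D)"
proof -
  define Dn where "Dn = rec_nat A (\<lambda>_ B. B \<union> (\<Union>F\<in>{F. finite F \<and> F \<subseteq> B}. h F))"
  have Dn_0: "Dn 0 = A"
    by (simp add: Dn_def)
  have Dn_Suc: "Dn (Suc n) = Dn n \<union> (\<Union>F\<in>{F. finite F \<and> F \<subseteq> Dn n}. h F)" for n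
    by (simp add: Dn_def)
  have "countable (Dn n)" for n
    by (induction n) (auto simp: Dn_def assms countable_Collect_finite_subset)
  then have "countable (\<Union>n. Dn n)"
    by blast
  moreover have "A \<subseteq> (\<Union>n. Dn n)"
    using Dn_0 by blast
  moreover have "h F \<subseteq> (\<Union>n. Dn n)" if F: "finite F" "F \<subseteq> (\<Union>n. Dn n)" for F
  proof -
    have "incseq Dn"
      by (rule incseq_SucI) (simp add: Dn_Suc)
    with F obtain n where "F \<subseteq> Dn n"
      using finite_subset_Union_incseq by blast
    with F(1) have "h F \<subseteq> Dn (Suc n)"
      by (auto simp: Dn_Suc)
    then show ?thesis
      by blast
  qed
  ultimately show ?thesis
    by (intro exI[of _ "\<Union>n. Dn n"] conjI allI impI) simp_all
qed

lemma Sym_omega_top_eq: "Sym_omega_top = subtopology pointwise_top Sym_omega"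
  by (simp add: Sym_omega_top_def Sym_top_def subtopology_subtopology Sym_omega_subset_Sym Int_absorb1)

lemma G_top_eq: "G_top D = subtopology pointwise_top (G D)"
  by (simp add: G_top_def Sym_top_def subtopology_subtopology G_def Int_absorb1)

lemma G_subset_Sym_omega:
  assumes "countable D"
  shows "G D \<subseteq> Sym_omega"
proof
  fix \<sigma> assume "\<sigma> \<in> G D"
  then have "\<sigma> \<in> Sym" "supp \<sigma> \<subseteq> D"
    by (simp_all add: G_def)
  moreover have "countable (supp \<sigma>)"
    using countable_subset[OF \<open>supp \<sigma> \<subseteq> D\<close> assms] .
  ultimately show "\<sigma> \<in> Sym_omega"
    by (simp add: Sym_omega_def)
qed

lemma Union_G_eq_Sym_omega: "(\<Union>D\<in>{D. countable D}. topspace (G_top D)) = Sym_omega"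
proof -
  have "f \<in> G (supp f)" if "f \<in> Sym_omega" for f
    using that by (simp add: G_def Sym_omega_def)
  then show ?thesis
    using G_subset_Sym_omega by (auto simp: G_top_eq Sym_omega_def)
qed

lemma mem_pointwise_nbhd_Int_iff:
  assumes "supp f \<subseteq> D" "supp g \<subseteq> D"
  shows "g \<in> pointwise_nbhd (F \<inter> D) f \<longleftrightarrow> g \<in> pointwise_nbhd F f"
proof -
  have off_D: "f x = x \<and> g x = x" if "x \<notin> D" for x
    using assms that by (auto simp: supp_def)
  show ?thesis
    unfolding pointwise_nbhd_def mem_Collect_eq
  proof
    assume agree: "\<forall>x\<in>F \<inter> D. g x = f x"
    show "\<forall>x\<in>F. g x = f x"
    proof
      fix x assume "x \<in> F"
      then show "g x = f x"
        using agree off_D[of x] by (cases "x \<in> D") auto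
    qed
  qed auto
qed

lemma openin_Sym_omega_if_traces_open:
  assumes U: "U \<subseteq> Sym_omega"
    and traces: "\<And>D. countable D \<Longrightarrow> openin (subtopology pointwise_top (G D)) (U \<inter> G D)"
  shows "openin (subtopology pointwise_top Sym_omega) U"
  unfolding openin_pointwise_subtopology_iff
proof (intro conjI ballI U)
  fix \<sigma> assume "\<sigma> \<in> U"
  show "\<exists>F. finite F \<and> Sym_omega \<inter> pointwise_nbhd F \<sigma> \<subseteq> U"
  proof (rule ccontr)
    assume "\<not> ?thesis"
    then have "\<forall>F. \<exists>\<tau>. finite F \<longrightarrow> \<tau> \<in> Sym_omega \<inter> pointwise_nbhd F \<sigma> - U"
      by blast
    then obtain \<tau> where \<tau>: "\<And>F. finite F \<Longrightarrow> \<tau> F \<in> Sym_omega \<inter> pointwise_nbhd F \<sigma> - U"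
      by (metis choice)
    have "countable (supp \<sigma>)"
      using \<open>\<sigma> \<in> U\<close> U by (auto simp: Sym_omega_def)
    moreover have "countable (supp (\<tau> F))" if "finite F" for F
      using \<tau>[OF that] by (simp add: Sym_omega_def)
    ultimately have "\<exists>D. countable D \<and> supp \<sigma> \<subseteq> D \<and> (\<forall>F. finite F \<longrightarrow> F \<subseteq> D \<longrightarrow> supp (\<tau> F) \<subseteq> D)"
      by (rule countable_closure_under_finite_subsets)
    then obtain D where
      D: "countable D" "supp \<sigma> \<subseteq> D" "\<forall>F. finite F \<longrightarrow> F \<subseteq> D \<longrightarrow> supp (\<tau> F) \<subseteq> D"
      by blast
    have "\<sigma> \<in> U \<inter> G D"
      using \<open>\<sigma> \<in> U\<close> U D(2) by (auto simp: G_def Sym_omega_def)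
    then obtain F where F: "finite F" "G D \<inter> pointwise_nbhd F \<sigma> \<subseteq> U \<inter> G D"
      using traces[OF D(1)] unfolding openin_pointwise_subtopology_iff by blast
    let ?\<tau> = "\<tau> (F \<inter> D)"
    have "?\<tau> \<in> G D"
      using \<tau>[of "F \<inter> D"] D(3) F(1) by (auto simp: G_def Sym_omega_def)
    moreover have "?\<tau> \<in> pointwise_nbhd F \<sigma>"
    proof -
      have "supp ?\<tau> \<subseteq> D"
        using \<open>?\<tau> \<in> G D\<close> by (simp add: G_def)
      moreover have "?\<tau> \<in> pointwise_nbhd (F \<inter> D) \<sigma>"
        using \<tau>[of "F \<inter> D"] F(1) by simp
      ultimately show ?thesis
        using mem_pointwise_nbhd_Int_iff[OF D(2)] by blast
    qed
    ultimately show False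
      using F(2) \<tau>[of "F \<inter> D"] F(1) by blast
  qed
qed

lemma colim_G_top_eq_Sym_omega_top:
  "colim_topology {D :: 'a set. countable D} G_top = Sym_omega_top"
proof (rule topology_eq[THEN iffD2], intro allI iffI)
  fix U :: "('a \<Rightarrow> 'a) set"
  assume "openin (colim_topology {D :: 'a set. countable D} G_top) U"
  then have "U \<subseteq> Sym_omega" and traces: "\<And>D. countable D \<Longrightarrow> openin (G_top D) (U \<inter> topspace (G_top D))"
    unfolding openin_colim_topology colim_open_def Union_G_eq_Sym_omega by auto
  have "openin (subtopology pointwise_top Sym_omega) U"
  proof (rule openin_Sym_omega_if_traces_open)
    show "U \<subseteq> Sym_omega"
      by fact
    fix D :: "'a set" assume "countable D"
    then show "openin (subtopology pointwise_top (G D)) (U \<inter> G D)"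
      using traces[of D] by (simp add: G_top_eq)
  qed
  then show "openin Sym_omega_top U"
    by (simp add: Sym_omega_top_eq)
next
  fix U :: "('a \<Rightarrow> 'a) set"
  assume "openin Sym_omega_top U"
  then have U: "openin (subtopology pointwise_top Sym_omega) U"
    by (simp add: Sym_omega_top_eq)
  have "U \<subseteq> Sym_omega"
    using openin_subset[OF U] by simp
  have "openin (G_top D) (U \<inter> topspace (G_top D))" if "countable D" for D
  proof -
    have "G_top D = subtopology (subtopology pointwise_top Sym_omega) (G D)"
      by (simp add: G_top_eq subtopology_subtopology Int_absorb1 G_subset_Sym_omega that)
    then have "openin (G_top D) (U \<inter> G D)"
      using openin_subtopology_Int[OF U] by simp
    then show ?thesis
      by (simp add: G_top_eq)
  qed
  with \<open>U \<subseteq> Sym_omega\<close> show "openin (colim_topology {D :: 'a set. countable D} G_top) U"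
    unfolding openin_colim_topology colim_open_def Union_G_eq_Sym_omega by blast
qed

theorem corollary2p7:
  shows "ACP {D :: 'a set. countable D} G_top \<and>
         colim_topology {D :: 'a set. countable D} G_top = Sym_omega_top"
proof
  show colim: "colim_topology {D :: 'a set. countable D} G_top = Sym_omega_top"
    by (rule colim_G_top_eq_Sym_omega_top)
  have group: "perm_group_topology Sym_omega Sym_omega_top"
    unfolding Sym_omega_top_eq
    by (rule perm_group_topology_pointwise[OF Sym_omega_subset_Sym Sym_omega_comp Sym_omega_inv])
  show "ACP {D :: 'a set. countable D} G_top"
    unfolding ACP_def Let_def Union_G_eq_Sym_omega colim
  proof (intro conjI ballI allI impI)
    show "perm_group_topology Sym_omega Sym_omega_top"
      by (rule group)
    fix D :: "'a set" assume "D \<in> {D. countable D}"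
    then show "continuous_map (G_top D) Sym_omega_top id"
      using continuous_map_id_colim_topology[of D "{D. countable D}" G_top] by (simp add: colim)
  next
    fix T :: "('a \<Rightarrow> 'a) topology" and U :: "('a \<Rightarrow> 'a) set"
    assume T: "perm_group_topology Sym_omega T \<and> (\<forall>D\<in>{D :: 'a set. countable D}. continuous_map (G_top D) T id)"
      and "openin T U"
    have "openin (colim_topology {D :: 'a set. countable D} G_top) U"
      by (rule openin_colim_topology_if_continuous_id)
        (use T \<open>openin T U\<close> in \<open>auto simp: perm_group_topology_def Union_G_eq_Sym_omega\<close>)
    then show "openin Sym_omega_top U"
      by (simp add: colim)
  qed
qed

end
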